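(* Let $M\ge2$ and let $L^{(1)},\dots,L^{(M)}$ be the $N^{(1)}\times N^{(1)}$ matrices of a hierarchical system as described in the context. Let $s_1,\dots,s_M$ be nonzero complex numbers and $L_s=\sum_{l=1}^M s_lL^{(l)}$. Then \[ \lambda(L_s)=\{0\}\cup\big(\lambda(s_1L^{(1)})\setminus\{0\}\big)\cup\cdots\cup\big(\lambda(s_ML^{(M)})\setminus\{0\}\big). \]
   Context: Hierarchical structure. Fix an integer $M\ge 2$ and positive integers $N^{(1)},\dots,N^{(M)}$; set $N^{(M+1)}:=1$. For each $l\in\{1,\dots,M\}$ the $N^{(l)}$ nodes of layer $l$ are partitioned into $N^{(l+1)}$ groups $G^{(l)}_1,\dots,G^{(l)}_{N^{(l+1)}}$ of sizes $k^{(l)}_p\ge1$ (so $\sum_pk^{(l)}_p=N^{(l)}$), numbered consecutively: group $G^{(l)}_p$ consists of nodes $\sum_{m<p}k^{(l)}_m+1,\dots,\sum_{m\le p}k^{(l)}_m$ of layer $l$. Each group $G^{(l)}_p$ carries a connected undirected graph with binary adjacency matrix; $L^{(l)}_p$ is its Laplacian (degree matrix minus adjacency matrix), and $L^{(l)}_D=\mathrm{diag}(L^{(l)}_1,\dots,L^{(l)}_{N^{(l+1)}})$ (block diagonal). Weights: positive constants $a_1,\dots,a_{N^{(1)}}$; $a^{(1)}_i=a_i$, $a^{(l+1)}_p=\sum_{i\in G^{(l)}_p}a^{(l)}_i$; $K^{(l)}=\mathrm{diag}(a^{(l)}_1,\dots,a^{(l)}_{N^{(l)}})^{-1}$. For $l=1,\dots,M-1$: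 $B^{(l)}=\mathrm{diag}(\mathbf{1}_{k^{(l)}_1},\dots,\mathbf{1}_{k^{(l)}_{N^{(l+1)}}})\in\mathbb{R}^{N^{(l)}\times N^{(l+1)}}$ ($\mathbf 1_k$ all-ones column vector), $C^{(l)}=\mathrm{diag}(C^{(l)}_1,\dots,C^{(l)}_{N^{(l+1)}})\in\mathbb{R}^{N^{(l+1)}\times N^{(l)}}$ with each $C^{(l)}_p\in\mathbb{R}^{1\times k^{(l)}_p}$ having nonnegative entries summing to $1$. $L^{(1)}=K^{(1)}L^{(1)}_D$ and $L^{(l)}=B^{(1)}\cdots B^{(l-1)}K^{(l)}L^{(l)}_DC^{(l-1)}\cdots C^{(1)}$ for $l=2,\dots,M$. $\lambda(A)$ is the set of eigenvalues of $A$. *)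

theory Defs
  imports Complex_Main "Jordan_Normal_Form.Spectral_Radius"
begin

text \<open>Conventions: layers are numbered 1..M, nodes and groups 0-based.
  N l = number of nodes of layer l; k l p = size of group p (p < N (l+1)) of layer l;
  A l p i j = adjacency matrix entry of the graph on group p of layer l (i,j < k l p);
  a i = weight of node i of layer 1; c l p j = j-th entry of the row C^(l)_p.\<close>

definition goff :: "(nat \<Rightarrow> nat \<Rightarrow> nat) \<Rightarrow> nat \<Rightarrow> nat \<Rightarrow> nat" where
  "goff k l p = (\<Sum>m<p. k l m)"

text \<open>hw a k l i = a^(l)_i (meaningful for l \<ge> 1).\<close>
fun hw :: "(nat \<Rightarrow> real) \<Rightarrow> (nat \<Rightarrow> nat \<Rightarrow> nat) \<Rightarrow> nat \<Rightarrow> nat \<Rightarrow> real" where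
  "hw a k 0 i = a i"
| "hw a k (Suc 0) i = a i"
| "hw a k (Suc (Suc l)) p =
     (\<Sum>i\<in>{goff k (Suc l) p ..< goff k (Suc l) p + k (Suc l) p}. hw a k (Suc l) i)"

definition graph_connected :: "nat \<Rightarrow> (nat \<Rightarrow> nat \<Rightarrow> real) \<Rightarrow> bool" where
  "graph_connected n A =
     (\<forall>i<n. \<forall>j<n. (\<lambda>x y. x < n \<and> y < n \<and> A x y = 1)\<^sup>*\<^sup>* i j)"

definition laplacian :: "nat \<Rightarrow> (nat \<Rightarrow> nat \<Rightarrow> real) \<Rightarrow> complex mat" where
  "laplacian n A = mat n n (\<lambda>(i,j).
      complex_of_real ((if i = j then (\<Sum>m<n. A i m) else 0) - A i j))"

definition LD :: "(nat \<Rightarrow> nat) \<Rightarrow> (nat \<Rightarrow> nat \<Rightarrow> nat) \<Rightarrow> (nat \<Rightarrow> nat \<Rightarrow> nat \<Rightarrow> nat \<Rightarrow> real)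
    \<Rightarrow> nat \<Rightarrow> complex mat" where
  "LD N k A l = diag_block_mat (map (\<lambda>p. laplacian (k l p) (A l p)) [0..<N (Suc l)])"

definition Kmat :: "(nat \<Rightarrow> nat) \<Rightarrow> (nat \<Rightarrow> real) \<Rightarrow> (nat \<Rightarrow> nat \<Rightarrow> nat) \<Rightarrow> nat \<Rightarrow> complex mat" where
  "Kmat N a k l = mat (N l) (N l) (\<lambda>(i,j). if i = j then complex_of_real (1 / hw a k l i) else 0)"

definition Bmat :: "(nat \<Rightarrow> nat) \<Rightarrow> (nat \<Rightarrow> nat \<Rightarrow> nat) \<Rightarrow> nat \<Rightarrow> complex mat" where
  "Bmat N k l = diag_block_mat (map (\<lambda>p. mat (k l p) 1 (\<lambda>_. 1)) [0..<N (Suc l)])"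

definition Cmat :: "(nat \<Rightarrow> nat) \<Rightarrow> (nat \<Rightarrow> nat \<Rightarrow> nat) \<Rightarrow> (nat \<Rightarrow> nat \<Rightarrow> nat \<Rightarrow> real)
    \<Rightarrow> nat \<Rightarrow> complex mat" where
  "Cmat N k c l = diag_block_mat
     (map (\<lambda>p. mat 1 (k l p) (\<lambda>(_,j). complex_of_real (c l p j))) [0..<N (Suc l)])"

primrec Bprod :: "(nat \<Rightarrow> nat) \<Rightarrow> (nat \<Rightarrow> nat \<Rightarrow> nat) \<Rightarrow> nat \<Rightarrow> complex mat" where
  "Bprod N k 0 = 1\<^sub>m (N 1)"
| "Bprod N k (Suc m) = Bprod N k m * Bmat N k (Suc m)"

primrec Cprod :: "(nat \<Rightarrow> nat) \<Rightarrow> (nat \<Rightarrow> nat \<Rightarrow> nat) \<Rightarrow> (nat \<Rightarrow> nat \<Rightarrow> nat \<Rightarrow> real)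
    \<Rightarrow> nat \<Rightarrow> complex mat" where
  "Cprod N k c 0 = 1\<^sub>m (N 1)"
| "Cprod N k c (Suc m) = Cmat N k c (Suc m) * Cprod N k c m"

definition HL :: "(nat \<Rightarrow> nat) \<Rightarrow> (nat \<Rightarrow> nat \<Rightarrow> nat) \<Rightarrow> (nat \<Rightarrow> nat \<Rightarrow> nat \<Rightarrow> nat \<Rightarrow> real)
    \<Rightarrow> (nat \<Rightarrow> real) \<Rightarrow> (nat \<Rightarrow> nat \<Rightarrow> nat \<Rightarrow> real) \<Rightarrow> nat \<Rightarrow> complex mat" where
  "HL N k A a c l = Bprod N k (l - 1) * Kmat N a k l * LD N k A l * Cprod N k c (l - 1)"

primrec msum :: "nat \<Rightarrow> (nat \<Rightarrow> complex mat) \<Rightarrow> nat \<Rightarrow> complex mat" where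
  "msum n f 0 = 0\<^sub>m n n"
| "msum n f (Suc m) = msum n f m + f (Suc m)"

end

theory Submission
  imports Defs
begin

(* Write P_l = B^(1)...B^(l) and Q_l = C^(l)...C^(1), so L^(l) = P_(l-1) K^(l) L^(l)_D Q_(l-1).
   Because the rows of every C^(l)_p sum to one, Q_l P_l = I, and because the rows of a Laplacian
   sum to zero, L^(l)_D B^(l) = 0; together L^(i) P_j = 0 for all j >= i.  As L^(j) factors
   through P_(j-1), this gives L^(i) L^(j) = 0 for i < j.  For square matrices with A B = 0 the
   nonzero eigenvalues of A + B are exactly those of A and of B, so induction over the layers
   gives the nonzero part of the spectrum.
   Finally L_s P_M = 0, and P_M is a nonzero column (N^(M+1) = 1 and Q_(M-1) P_M = B^(M)),
   so 0 is an eigenvalue. *)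

lemma smult_vec_eq_0_vecD:
  fixes v :: "'a :: field vec"
  assumes e: "e \<noteq> 0" and ev: "e \<cdot>\<^sub>v v = 0\<^sub>v n" and v: "v \<in> carrier_vec n"
  shows "v = 0\<^sub>v n"
proof (rule eq_vecI)
  fix i assume "i < dim_vec (0\<^sub>v n :: 'a vec)"
  with v have "e * v $ i = 0" using arg_cong[OF ev, of "\<lambda>w. w $ i"] by auto
  with e show "v $ i = 0\<^sub>v n $ i" using \<open>i < _\<close> by simp
qed (use v in simp)

lemma zero_mat_mult_vec [simp]: "v \<in> carrier_vec n \<Longrightarrow> 0\<^sub>m m n *\<^sub>v v = 0\<^sub>v m"
  by (intro eq_vecI) auto

lemma eigenvalue_zero_mat_imp_0:
  assumes "eigenvalue (0\<^sub>m n n :: 'a :: field mat) e" shows "e = 0"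
proof (rule ccontr)
  assume "e \<noteq> 0"
  from assms obtain v where v: "v \<in> carrier_vec n" "v \<noteq> 0\<^sub>v n" "0\<^sub>m n n *\<^sub>v v = e \<cdot>\<^sub>v v"
    unfolding eigenvalue_def eigenvector_def by auto
  then have "e \<cdot>\<^sub>v v = 0\<^sub>v n" by simp
  with \<open>e \<noteq> 0\<close> v show False using smult_vec_eq_0_vecD by blast
qed

lemma eigenvalue_transpose_mat:
  fixes A :: "'a :: field mat"
  assumes "A \<in> carrier_mat n n"
  shows "eigenvalue (transpose_mat A) e \<longleftrightarrow> eigenvalue A e"
  using assms by (simp add: eigenvalue_root_char_poly[of _ n])

lemma eigenvalue_add_right:
  fixes A B :: "'a :: field mat"
  assumes A: "A \<in> carrier_mat n n" and B: "B \<in> carrier_mat n n"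
    and AB: "A * B = 0\<^sub>m n n" and e: "e \<noteq> 0" and ev: "eigenvalue B e"
  shows "eigenvalue (A + B) e"
proof -
  from ev obtain v where v: "v \<in> carrier_vec n" "v \<noteq> 0\<^sub>v n" "B *\<^sub>v v = e \<cdot>\<^sub>v v"
    unfolding eigenvalue_def eigenvector_def using B by auto
  \<comment> \<open>\<open>v = e\<^sup>-\<^sup>1 B v\<close> lies in the range of \<open>B\<close>, which \<open>A\<close> annihilates\<close>
  have "e \<cdot>\<^sub>v (A *\<^sub>v v) = (A * B) *\<^sub>v v"
    using A B v by (simp add: mult_mat_vec)
  also have "\<dots> = 0\<^sub>v n" using AB v by auto
  finally have "A *\<^sub>v v = 0\<^sub>v n"
    by (rule smult_vec_eq_0_vecD[OF e]) (use A v in simp)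
  then have "(A + B) *\<^sub>v v = e \<cdot>\<^sub>v v"
    using A B v by (simp add: add_mult_distrib_mat_vec)
  then show ?thesis unfolding eigenvalue_def eigenvector_def using v A B by auto
qed

lemma eigenvalue_add_left:
  fixes A B :: "'a :: field mat"
  assumes A: "A \<in> carrier_mat n n" and B: "B \<in> carrier_mat n n"
    and AB: "A * B = 0\<^sub>m n n" and e: "e \<noteq> 0" and ev: "eigenvalue A e"
  shows "eigenvalue (A + B) e"
proof -
  have "transpose_mat B * transpose_mat A = 0\<^sub>m n n"
    using transpose_mult[OF A B] AB by simp
  then have "eigenvalue (transpose_mat B + transpose_mat A) e"
    using eigenvalue_add_right[of "transpose_mat B" n "transpose_mat A"] A B e ev
      eigenvalue_transpose_mat by auto
  also have "transpose_mat B + transpose_mat A = transpose_mat (A + B)"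
    using A B by (simp add: transpose_add comm_add_mat[of _ n n])
  finally show ?thesis using eigenvalue_transpose_mat[of "A + B" n] A B by simp
qed

lemma eigenvalue_addD:
  fixes A B :: "'a :: field mat"
  assumes A: "A \<in> carrier_mat n n" and B: "B \<in> carrier_mat n n"
    and AB: "A * B = 0\<^sub>m n n" and ev: "eigenvalue (A + B) e"
  shows "eigenvalue A e \<or> eigenvalue B e"
proof -
  from ev obtain v where v: "v \<in> carrier_vec n" "v \<noteq> 0\<^sub>v n" "(A + B) *\<^sub>v v = e \<cdot>\<^sub>v v"
    unfolding eigenvalue_def eigenvector_def using B by auto
  define w where "w = A *\<^sub>v v"
  have w: "w \<in> carrier_vec n" using A v(1) unfolding w_def by simp
  have sum: "w + B *\<^sub>v v = e \<cdot>\<^sub>v v"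
    using A B v unfolding w_def by (simp add: add_mult_distrib_mat_vec)
  \<comment> \<open>either \<open>A v\<close> is an eigenvector of \<open>A\<close>, or it vanishes and \<open>v\<close> is one of \<open>B\<close>\<close>
  have "A *\<^sub>v (B *\<^sub>v v) = 0\<^sub>v n"
    using A B v AB by (simp flip: assoc_mult_mat_vec)
  then have "A *\<^sub>v w = A *\<^sub>v (w + B *\<^sub>v v)"
    using A B v w by (simp add: mult_add_distrib_mat_vec)
  also have "\<dots> = e \<cdot>\<^sub>v w" using sum A v unfolding w_def by (simp add: mult_mat_vec)
  finally have Aw: "A *\<^sub>v w = e \<cdot>\<^sub>v w" .
  show ?thesis
  proof (cases "w = 0\<^sub>v n")
    case False
    then show ?thesis using Aw w A unfolding eigenvalue_def eigenvector_def by auto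
  next
    case True
    then have "B *\<^sub>v v = e \<cdot>\<^sub>v v" using sum v B by simp
    then show ?thesis using v B unfolding eigenvalue_def eigenvector_def by auto
  qed
qed

lemma eigenvalue_add_iff:
  fixes A B :: "'a :: field mat"
  assumes "A \<in> carrier_mat n n" "B \<in> carrier_mat n n" "A * B = 0\<^sub>m n n" "e \<noteq> 0"
  shows "eigenvalue (A + B) e \<longleftrightarrow> eigenvalue A e \<or> eigenvalue B e"
  using assms eigenvalue_add_left eigenvalue_add_right eigenvalue_addD by metis

lemma eigenvalue_0_if_mult_eq_0:
  fixes A X :: "'a :: field mat"
  assumes A: "A \<in> carrier_mat n n" and X: "X \<in> carrier_mat n q"
    and AX: "A * X = 0\<^sub>m n q" and X0: "X \<noteq> 0\<^sub>m n q"
  shows "eigenvalue A 0"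
proof -
  have "\<exists>j<q. col X j \<noteq> 0\<^sub>v n"
  proof (rule ccontr)
    assume "\<not> ?thesis"
    then have "X = 0\<^sub>m n q" using X by (intro mat_col_eqI) auto
    with X0 show False ..
  qed
  then obtain j where j: "j < q" "col X j \<noteq> 0\<^sub>v n" by blast
  have "A *\<^sub>v col X j = 0 \<cdot>\<^sub>v col X j"
    using A X AX j by (auto simp flip: col_mult2)
  then show ?thesis
    unfolding eigenvalue_def eigenvector_def using A X j by (auto intro!: exI[of _ "col X j"])
qed

lemma msum_carrier:
  "(\<And>l. 1 \<le> l \<Longrightarrow> l \<le> m \<Longrightarrow> f l \<in> carrier_mat n n) \<Longrightarrow> msum n f m \<in> carrier_mat n n"
  by (induct m) auto

lemma msum_mult_eq_0:
  assumes "\<And>l. 1 \<le> l \<Longrightarrow> l \<le> m \<Longrightarrow> f l \<in> carrier_mat n n" "X \<in> carrier_mat n q"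
    "\<And>l. 1 \<le> l \<Longrightarrow> l \<le> m \<Longrightarrow> f l * X = 0\<^sub>m n q"
  shows "msum n f m * X = 0\<^sub>m n q"
  using assms
proof (induct m)
  case (Suc m)
  have "msum n f m \<in> carrier_mat n n" using Suc.prems by (intro msum_carrier) auto
  then have "msum n f (Suc m) * X = msum n f m * X + f (Suc m) * X"
    using Suc.prems by (simp add: add_mult_distrib_mat)
  then show ?case using Suc by simp
qed simp

lemma spectrum_msum_minus_0:
  fixes f :: "nat \<Rightarrow> complex mat"
  assumes carrier: "\<And>l. 1 \<le> l \<Longrightarrow> l \<le> m \<Longrightarrow> f l \<in> carrier_mat n n"
    and orth: "\<And>i j. 1 \<le> i \<Longrightarrow> i < j \<Longrightarrow> j \<le> m \<Longrightarrow> f i * f j = 0\<^sub>m n n"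
  shows "spectrum (msum n f m) - {0} = (\<Union>l\<in>{1..m}. spectrum (f l)) - {0}"
  using assms
proof (induct m)
  case 0
  then show ?case using eigenvalue_zero_mat_imp_0 by (auto simp: spectrum_def)
next
  case (Suc m)
  have "msum n f m \<in> carrier_mat n n" using Suc.prems by (intro msum_carrier) auto
  moreover have "msum n f m * f (Suc m) = 0\<^sub>m n n"
    using Suc.prems by (intro msum_mult_eq_0) auto
  ultimately have "e \<in> spectrum (msum n f (Suc m)) \<longleftrightarrow>
      e \<in> spectrum (msum n f m) \<or> e \<in> spectrum (f (Suc m))" if "e \<noteq> 0" for e
    using eigenvalue_add_iff[OF _ _ _ that] Suc.prems by (simp add: spectrum_def)
  moreover have "{1..Suc m} = insert (Suc m) {1..m}" by auto
  ultimately show ?case using Suc by auto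
qed

lemma diag_block_mat_mult:
  assumes "\<And>p. p \<in> set ps \<Longrightarrow> dim_col (f p) = dim_row (g p)"
  shows "diag_block_mat (map f ps) * diag_block_mat (map g ps :: 'a :: comm_ring_1 mat list)
       = diag_block_mat (map (\<lambda>p. f p * g p) ps)"
  using assms
proof (induct ps)
  case (Cons p ps)
  define F G where "F = diag_block_mat (map f ps)" and "G = diag_block_mat (map g ps)"
  have FG: "F * G = diag_block_mat (map (\<lambda>p. f p * g p) ps)"
    using Cons unfolding F_def G_def by auto
  have "dim_col F = dim_row G"
    using Cons.prems unfolding F_def G_def dim_diag_block_mat by (induct ps) auto
  then have "four_block_mat (f p) (0\<^sub>m (dim_row (f p)) (dim_col F))
        (0\<^sub>m (dim_row F) (dim_col (f p))) F
      * four_block_mat (g p) (0\<^sub>m (dim_row (g p)) (dim_col G)) (0\<^sub>m (dim_row G) (dim_col (g p))) G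
    = four_block_mat (f p * g p) (0\<^sub>m (dim_row (f p)) (dim_col G))
        (0\<^sub>m (dim_row F) (dim_col (g p))) (F * G)"
    using Cons.prems by (subst mult_four_block_mat) (auto intro: carrier_matI)
  then show ?case
    unfolding list.map diag_block_mat.simps Let_def F_def[symmetric] G_def[symmetric] FG[symmetric]
    by simp
qed simp

lemma sum_list_map_upt_0: "sum_list (map f [0..<n]) = (\<Sum>p<n. f p)"
  by (induct n) auto

lemma diag_block_mat_upt_carrier:
  assumes "\<And>p. p < n \<Longrightarrow> f p \<in> carrier_mat (r p) (c p)"
  shows "diag_block_mat (map f [0..<n]) \<in> carrier_mat (\<Sum>p<n. r p) (\<Sum>p<n. c p)"
proof -
  have "dim_row (f p) = r p" "dim_col (f p) = c p" if "p < n" for p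
    using assms[OF that] by auto
  then show ?thesis
    unfolding carrier_mat_def mem_Collect_eq dim_diag_block_mat map_map sum_list_map_upt_0 o_def
    by (intro conjI sum.cong refl) auto
qed

lemma diag_block_mat_zero:
  "diag_block_mat (map (\<lambda>p. 0\<^sub>m (r p) (c p)) ps)
     = (0\<^sub>m (sum_list (map r ps)) (sum_list (map c ps)) :: 'a :: zero mat)"
  by (induct ps) (auto simp: Let_def dim_diag_block_mat o_def)

lemma diag_block_mat_one_1:
  "diag_block_mat (map (\<lambda>p. 1\<^sub>m 1) ps) = (1\<^sub>m (length ps) :: 'a :: zero_neq_one mat)"
  using diag_block_one_mat[of "map (\<lambda>p. 1\<^sub>m 1 :: 'a mat) ps"]
  by (simp add: o_def sum_list_triv)

lemma laplacian_mult_ones: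
  "laplacian n A * mat n 1 (\<lambda>_. 1) = 0\<^sub>m n 1"
proof (rule eq_matI)
  fix i j assume "i < dim_row (0\<^sub>m n 1 :: complex mat)" "j < dim_col (0\<^sub>m n 1 :: complex mat)"
  then have i: "i < n" and j: "j = 0" by auto
  have "(laplacian n A * mat n 1 (\<lambda>_. 1)) $$ (i, j)
      = of_real (\<Sum>m<n. (if i = m then (\<Sum>m<n. A i m) else 0) - A i m)"
    using i j by (simp add: laplacian_def scalar_prod_def lessThan_atLeast0)
  also have "\<dots> = 0" using i by (simp add: sum_subtractf)
  finally show "(laplacian n A * mat n 1 (\<lambda>_. 1)) $$ (i, j) = 0\<^sub>m n 1 $$ (i, j)"
    using i j by simp
qed (auto simp: laplacian_def)

lemma stochastic_row_mult_ones:
  assumes "(\<Sum>j<n. c j) = 1"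
  shows "mat 1 n (\<lambda>(_, j). complex_of_real (c j)) * mat n 1 (\<lambda>_. 1) = 1\<^sub>m 1"
  using assms[THEN arg_cong[of _ _ complex_of_real]]
  by (intro eq_matI) (auto simp: scalar_prod_def lessThan_atLeast0)

lemma dim_laplacian [simp]: "dim_row (laplacian n A) = n" "dim_col (laplacian n A) = n"
  by (simp_all add: laplacian_def)

lemma Bmat_carrier: "Bmat N k l \<in> carrier_mat (\<Sum>p<N (Suc l). k l p) (N (Suc l))"
proof -
  have "Bmat N k l \<in> carrier_mat (\<Sum>p<N (Suc l). k l p) (\<Sum>p<N (Suc l). 1)"
    unfolding Bmat_def by (rule diag_block_mat_upt_carrier) simp
  then show ?thesis by simp
qed

lemma Cmat_carrier: "Cmat N k c l \<in> carrier_mat (N (Suc l)) (\<Sum>p<N (Suc l). k l p)"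
proof -
  have "Cmat N k c l \<in> carrier_mat (\<Sum>p<N (Suc l). 1) (\<Sum>p<N (Suc l). k l p)"
    unfolding Cmat_def by (rule diag_block_mat_upt_carrier) simp
  then show ?thesis by simp
qed

lemma LD_carrier: "LD N k A l \<in> carrier_mat (\<Sum>p<N (Suc l). k l p) (\<Sum>p<N (Suc l). k l p)"
  unfolding LD_def by (rule diag_block_mat_upt_carrier) (simp add: carrier_matI)

lemma Cmat_mult_Bmat:
  assumes "\<And>p. p < N (Suc l) \<Longrightarrow> (\<Sum>j<k l p. c l p j) = 1"
  shows "Cmat N k c l * Bmat N k l = 1\<^sub>m (N (Suc l))"
proof -
  have "mat 1 (k l p) (\<lambda>(_, j). complex_of_real (c l p j)) * mat (k l p) 1 (\<lambda>_. 1) = 1\<^sub>m 1"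
    if "p < N (Suc l)" for p
    using assms[OF that] by (rule stochastic_row_mult_ones)
  then have "Cmat N k c l * Bmat N k l = diag_block_mat (map (\<lambda>p. 1\<^sub>m 1) [0..<N (Suc l)])"
    unfolding Cmat_def Bmat_def
    by (subst diag_block_mat_mult) (auto intro!: arg_cong[of _ _ diag_block_mat] map_cong)
  also have "\<dots> = 1\<^sub>m (N (Suc l))"
    using diag_block_mat_one_1[of "[0..<N (Suc l)]"] by simp
  finally show ?thesis .
qed

lemma LD_mult_Bmat: "LD N k A l * Bmat N k l = 0\<^sub>m (\<Sum>p<N (Suc l). k l p) (N (Suc l))"
proof -
  have "LD N k A l * Bmat N k l
      = diag_block_mat
          (map (\<lambda>p. laplacian (k l p) (A l p) * mat (k l p) 1 (\<lambda>_. 1)) [0..<N (Suc l)])"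
    unfolding LD_def Bmat_def by (rule diag_block_mat_mult) simp
  also have "\<dots> = diag_block_mat (map (\<lambda>p. 0\<^sub>m (k l p) 1) [0..<N (Suc l)])"
    by (simp only: laplacian_mult_ones)
  also have "\<dots> = 0\<^sub>m (\<Sum>p<N (Suc l). k l p) (N (Suc l))"
    by (simp add: diag_block_mat_zero sum_list_map_upt_0)
  finally show ?thesis .
qed

lemma Bmat_index_0_0:
  assumes "0 < N (Suc l)" "0 < k l 0"
  shows "Bmat N k l $$ (0, 0) = 1"
  using assms(2) unfolding Bmat_def upt_conv_Cons[OF assms(1)] by (simp add: Let_def)

lemma mult_eq_0_if_left_inverse_annihilates:
  fixes P :: "'a :: comm_ring_1 mat"
  assumes P: "P \<in> carrier_mat r n" and L: "L \<in> carrier_mat n n" and C: "C \<in> carrier_mat n q"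
    and B: "B \<in> carrier_mat q n" and D: "D \<in> carrier_mat n s"
    and CB: "C * B = 1\<^sub>m n" and LD: "L * D = 0\<^sub>m n s"
  shows "(P * L * C) * (B * D) = 0\<^sub>m r s"
proof -
  have PL: "P * L \<in> carrier_mat r n" using P L by simp
  have "(P * L * C) * (B * D) = (P * L) * (C * (B * D))"
    by (rule assoc_mult_mat[OF PL C mult_carrier_mat[OF B D]])
  also have "C * (B * D) = (C * B) * D"
    by (rule assoc_mult_mat[OF C B D, symmetric])
  also have "(P * L) * ((C * B) * D) = P * (L * D)"
    using assoc_mult_mat[OF P L D] CB D by simp
  also have "\<dots> = 0\<^sub>m r s" using LD P by simp
  finally show ?thesis .
qed

lemma Kmat_carrier: "Kmat N a k l \<in> carrier_mat (N l) (N l)"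
  unfolding Kmat_def by simp

locale hierarchy =
  fixes M :: nat and N :: "nat \<Rightarrow> nat" and k :: "nat \<Rightarrow> nat \<Rightarrow> nat"
    and c :: "nat \<Rightarrow> nat \<Rightarrow> nat \<Rightarrow> real"
  assumes group_sizes: "\<And>l. 1 \<le> l \<Longrightarrow> l \<le> M \<Longrightarrow> (\<Sum>p<N (Suc l). k l p) = N l"
    and stochastic_rows:
      "\<And>l p. 1 \<le> l \<Longrightarrow> l < M \<Longrightarrow> p < N (Suc l) \<Longrightarrow> (\<Sum>j<k l p. c l p j) = 1"
begin

lemma Bmat_layer_carrier: "1 \<le> l \<Longrightarrow> l \<le> M \<Longrightarrow> Bmat N k l \<in> carrier_mat (N l) (N (Suc l))"
  using Bmat_carrier[of N k l] group_sizes by simp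

lemma Cmat_layer_carrier: "1 \<le> l \<Longrightarrow> l \<le> M \<Longrightarrow> Cmat N k c l \<in> carrier_mat (N (Suc l)) (N l)"
  using Cmat_carrier[of N k c l] group_sizes by simp

lemma LD_layer_carrier: "1 \<le> l \<Longrightarrow> l \<le> M \<Longrightarrow> LD N k A l \<in> carrier_mat (N l) (N l)"
  using LD_carrier[of N k A l] group_sizes by simp

lemma Bprod_carrier: "m \<le> M \<Longrightarrow> Bprod N k m \<in> carrier_mat (N 1) (N (Suc m))"
proof (induct m)
  case (Suc m)
  then have "Bprod N k m \<in> carrier_mat (N 1) (N (Suc m))" by simp
  moreover have "Bmat N k (Suc m) \<in> carrier_mat (N (Suc m)) (N (Suc (Suc m)))"
    using Suc.prems by (intro Bmat_layer_carrier) auto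
  ultimately show ?case unfolding Bprod.simps by (rule mult_carrier_mat)
qed simp

lemma Cprod_carrier: "m \<le> M \<Longrightarrow> Cprod N k c m \<in> carrier_mat (N (Suc m)) (N 1)"
proof (induct m)
  case (Suc m)
  then have "Cprod N k c m \<in> carrier_mat (N (Suc m)) (N 1)" by simp
  moreover have "Cmat N k c (Suc m) \<in> carrier_mat (N (Suc (Suc m))) (N (Suc m))"
    using Suc.prems by (intro Cmat_layer_carrier) auto
  ultimately show ?case unfolding Cprod.simps by (rule mult_carrier_mat[rotated])
qed simp

lemma HL_Suc_eq:
  assumes "Suc m \<le> M"
  shows "HL N k A a c (Suc m)
    = Bprod N k m * (Kmat N a k (Suc m) * LD N k A (Suc m) * Cprod N k c m)"
proof -
  have Bp: "Bprod N k m \<in> carrier_mat (N 1) (N (Suc m))"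
    and Cp: "Cprod N k c m \<in> carrier_mat (N (Suc m)) (N 1)"
    and L: "LD N k A (Suc m) \<in> carrier_mat (N (Suc m)) (N (Suc m))"
    using assms Bprod_carrier Cprod_carrier LD_layer_carrier by simp_all
  note K = Kmat_carrier[of N a k "Suc m"]
  show ?thesis
    unfolding HL_def using assoc_mult_mat[OF mult_carrier_mat[OF Bp K] L Cp]
      assoc_mult_mat[OF Bp K mult_carrier_mat[OF L Cp]] assoc_mult_mat[OF K L Cp]
    by simp
qed

lemma HL_carrier:
  assumes "1 \<le> l" "l \<le> M"
  shows "HL N k A a c l \<in> carrier_mat (N 1) (N 1)"
proof -
  obtain m where l: "l = Suc m" using assms(1) by (cases l) auto
  have Bp: "Bprod N k m \<in> carrier_mat (N 1) (N (Suc m))"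
    and Cp: "Cprod N k c m \<in> carrier_mat (N (Suc m)) (N 1)"
    and L: "LD N k A (Suc m) \<in> carrier_mat (N (Suc m)) (N (Suc m))"
    using assms Bprod_carrier Cprod_carrier LD_layer_carrier unfolding l by simp_all
  note K = Kmat_carrier[of N a k "Suc m"]
  show ?thesis
    unfolding HL_def l
    using mult_carrier_mat[OF mult_carrier_mat[OF mult_carrier_mat[OF Bp K] L] Cp] by simp
qed

lemma Cprod_mult_Bprod: "m < M \<Longrightarrow> Cprod N k c m * Bprod N k m = 1\<^sub>m (N (Suc m))"
proof (induct m)
  case (Suc m)
  have Cm: "Cmat N k c (Suc m) \<in> carrier_mat (N (Suc (Suc m))) (N (Suc m))"
    and Bm: "Bmat N k (Suc m) \<in> carrier_mat (N (Suc m)) (N (Suc (Suc m)))"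
    using Suc.prems by (auto intro: Cmat_layer_carrier Bmat_layer_carrier)
  have Bp: "Bprod N k m \<in> carrier_mat (N 1) (N (Suc m))"
    and Cp: "Cprod N k c m \<in> carrier_mat (N (Suc m)) (N 1)"
    using Suc.prems Bprod_carrier Cprod_carrier by simp_all
  have "Cprod N k c (Suc m) * Bprod N k (Suc m)
      = Cmat N k c (Suc m) * ((Cprod N k c m * Bprod N k m) * Bmat N k (Suc m))"
    using assoc_mult_mat[OF Cm Cp mult_carrier_mat[OF Bp Bm]] assoc_mult_mat[OF Cp Bp Bm]
    by simp
  also have "\<dots> = Cmat N k c (Suc m) * Bmat N k (Suc m)"
    using Suc Bm by simp
  also have "\<dots> = 1\<^sub>m (N (Suc (Suc m)))"
    using Suc.prems stochastic_rows by (intro Cmat_mult_Bmat) auto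
  finally show ?case .
qed simp

lemma HL_mult_Bprod_self:
  assumes "1 \<le> l" "l \<le> M"
  shows "HL N k A a c l * Bprod N k l = 0\<^sub>m (N 1) (N (Suc l))"
proof -
  obtain m where l: "l = Suc m" using assms(1) by (cases l) auto
  have Bp: "Bprod N k m \<in> carrier_mat (N 1) (N l)"
    and Cp: "Cprod N k c m \<in> carrier_mat (N l) (N 1)"
    and L: "LD N k A l \<in> carrier_mat (N l) (N l)"
    and Bm: "Bmat N k l \<in> carrier_mat (N l) (N (Suc l))"
    using assms Bprod_carrier Cprod_carrier LD_layer_carrier Bmat_layer_carrier unfolding l
    by simp_all
  have CB: "Cprod N k c m * Bprod N k m = 1\<^sub>m (N l)"
    using assms Cprod_mult_Bprod unfolding l by simp
  have LB: "LD N k A l * Bmat N k l = 0\<^sub>m (N l) (N (Suc l))"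
    using assms LD_mult_Bmat[of N k A l] group_sizes by simp
  have "HL N k A a c l * Bprod N k l
      = (Bprod N k m * Kmat N a k l * LD N k A l * Cprod N k c m) * (Bprod N k m * Bmat N k l)"
    unfolding HL_def l by simp
  also have "\<dots> = 0\<^sub>m (N 1) (N (Suc l))"
    using mult_carrier_mat[OF Bp Kmat_carrier[of N a k l]]
    by (rule mult_eq_0_if_left_inverse_annihilates[OF _ L Cp Bp Bm CB LB])
  finally show ?thesis .
qed

lemma HL_mult_Bprod:
  assumes "1 \<le> l" "l \<le> j" "j \<le> M"
  shows "HL N k A a c l * Bprod N k j = 0\<^sub>m (N 1) (N (Suc j))"
  using assms(2,3)
proof (induct j rule: dec_induct)
  case base
  show ?case by (rule HL_mult_Bprod_self) (use assms base in auto)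
next
  case (step j)
  have H: "HL N k A a c l \<in> carrier_mat (N 1) (N 1)"
    and Bp: "Bprod N k j \<in> carrier_mat (N 1) (N (Suc j))"
    and Bm: "Bmat N k (Suc j) \<in> carrier_mat (N (Suc j)) (N (Suc (Suc j)))"
    using assms step HL_carrier Bprod_carrier Bmat_layer_carrier by simp_all
  have "HL N k A a c l * Bprod N k (Suc j) = (HL N k A a c l * Bprod N k j) * Bmat N k (Suc j)"
    using assoc_mult_mat[OF H Bp Bm] by simp
  also have "\<dots> = 0\<^sub>m (N 1) (N (Suc (Suc j)))"
    using step Bm by simp
  finally show ?case .
qed

lemma HL_mult_HL:
  assumes "1 \<le> i" "i < j" "j \<le> M"
  shows "HL N k A a c i * HL N k A a c j = 0\<^sub>m (N 1) (N 1)"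
proof -
  obtain m where j: "j = Suc m" using assms(2) by (cases j) auto
  define R where "R = Kmat N a k j * LD N k A j * Cprod N k c m"
  have H: "HL N k A a c i \<in> carrier_mat (N 1) (N 1)"
    and Bp: "Bprod N k m \<in> carrier_mat (N 1) (N j)"
    and L: "LD N k A j \<in> carrier_mat (N j) (N j)"
    and Cp: "Cprod N k c m \<in> carrier_mat (N j) (N 1)"
    using assms HL_carrier Bprod_carrier LD_layer_carrier Cprod_carrier unfolding j by simp_all
  have R: "R \<in> carrier_mat (N j) (N 1)"
    unfolding R_def using mult_carrier_mat[OF mult_carrier_mat[OF Kmat_carrier[of N a k j] L] Cp] .
  have "HL N k A a c i * HL N k A a c j = HL N k A a c i * (Bprod N k m * R)"
    using assms HL_Suc_eq[of m] unfolding R_def j by simp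
  also have "\<dots> = (HL N k A a c i * Bprod N k m) * R"
    by (rule assoc_mult_mat[OF H Bp R, symmetric])
  also have "\<dots> = 0\<^sub>m (N 1) (N 1)"
    using assms HL_mult_Bprod[of i m] R unfolding j by simp
  finally show ?thesis .
qed

lemma Bprod_neq_0:
  assumes "1 \<le> l" "l \<le> M" "0 < N (Suc l)" "0 < k l 0"
  shows "Bprod N k l \<noteq> 0\<^sub>m (N 1) (N (Suc l))"
proof
  assume B0: "Bprod N k l = 0\<^sub>m (N 1) (N (Suc l))"
  obtain m where l: "l = Suc m" using assms(1) by (cases l) auto
  have Bp: "Bprod N k m \<in> carrier_mat (N 1) (N l)"
    and Cp: "Cprod N k c m \<in> carrier_mat (N l) (N 1)"
    and Bm: "Bmat N k l \<in> carrier_mat (N l) (N (Suc l))"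
    using assms Bprod_carrier Cprod_carrier Bmat_layer_carrier unfolding l by simp_all
  have "Bmat N k l = (Cprod N k c m * Bprod N k m) * Bmat N k l"
    using assms Bm Cprod_mult_Bprod unfolding l by simp
  also have "\<dots> = Cprod N k c m * Bprod N k l"
    using assoc_mult_mat[OF Cp Bp Bm] unfolding l by simp
  also have "\<dots> = 0\<^sub>m (N l) (N (Suc l))"
    using Cp unfolding B0 by simp
  finally have "Bmat N k l = 0\<^sub>m (N l) (N (Suc l))" .
  moreover have "k l 0 \<le> (\<Sum>p<N (Suc l). k l p)"
    using assms(3) by (intro member_le_sum) auto
  then have "0 < N l" using group_sizes[OF assms(1,2)] assms(4) by simp
  ultimately have "Bmat N k l $$ (0, 0) = 0" using assms(3) by simp
  with Bmat_index_0_0[of N l k, OF assms(3,4)] show False by simp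
qed

lemma smult_HL_carrier:
  "1 \<le> l \<Longrightarrow> l \<le> M \<Longrightarrow> s l \<cdot>\<^sub>m HL N k A a c l \<in> carrier_mat (N 1) (N 1)"
  using HL_carrier by simp

lemma smult_HL_mult_smult_HL:
  assumes "1 \<le> i" "i < j" "j \<le> M"
  shows "(s i \<cdot>\<^sub>m HL N k A a c i) * (s j \<cdot>\<^sub>m HL N k A a c j) = 0\<^sub>m (N 1) (N 1)"
proof -
  have Hi: "HL N k A a c i \<in> carrier_mat (N 1) (N 1)"
    and Hj: "HL N k A a c j \<in> carrier_mat (N 1) (N 1)"
    using assms HL_carrier by simp_all
  show ?thesis
    using HL_mult_HL[OF assms] mult_smult_assoc_mat[OF Hi smult_carrier_mat[OF Hj]]
      mult_smult_distrib[OF Hi Hj] by simp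
qed

lemma msum_smult_HL_mult_Bprod:
  "msum (N 1) (\<lambda>l. s l \<cdot>\<^sub>m HL N k A a c l) M * Bprod N k M = 0\<^sub>m (N 1) (N (Suc M))"
proof (rule msum_mult_eq_0[OF smult_HL_carrier Bprod_carrier[OF order_refl]])
  fix l assume "1 \<le> l" "l \<le> M"
  then show "s l \<cdot>\<^sub>m HL N k A a c l * Bprod N k M = 0\<^sub>m (N 1) (N (Suc M))"
    using HL_mult_Bprod[of l M] mult_smult_assoc_mat[OF HL_carrier Bprod_carrier] by simp
qed

end

theorem corollary1:
  fixes M :: nat and N :: "nat \<Rightarrow> nat" and k :: "nat \<Rightarrow> nat \<Rightarrow> nat"
    and A :: "nat \<Rightarrow> nat \<Rightarrow> nat \<Rightarrow> nat \<Rightarrow> real" and a :: "nat \<Rightarrow> real"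
    and c :: "nat \<Rightarrow> nat \<Rightarrow> nat \<Rightarrow> real" and s :: "nat \<Rightarrow> complex"
  assumes M2: "M \<ge> 2"
    and Npos: "\<forall>l\<in>{1..M}. N l > 0"
    and Ntop: "N (Suc M) = 1"
    and kpos: "\<forall>l\<in>{1..M}. \<forall>p<N (Suc l). k l p \<ge> 1"
    and ksum: "\<forall>l\<in>{1..M}. (\<Sum>p<N (Suc l). k l p) = N l"
    and Abin: "\<forall>l\<in>{1..M}. \<forall>p<N (Suc l). \<forall>i<k l p. \<forall>j<k l p. A l p i j = 0 \<or> A l p i j = 1"
    and Asym: "\<forall>l\<in>{1..M}. \<forall>p<N (Suc l). \<forall>i<k l p. \<forall>j<k l p. A l p i j = A l p j i"
    and Aloop: "\<forall>l\<in>{1..M}. \<forall>p<N (Suc l). \<forall>i<k l p. A l p i i = 0"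
    and Aconn: "\<forall>l\<in>{1..M}. \<forall>p<N (Suc l). graph_connected (k l p) (A l p)"
    and apos: "\<forall>i<N 1. a i > 0"
    and cnn: "\<forall>l\<in>{1..M-1}. \<forall>p<N (Suc l). \<forall>j<k l p. c l p j \<ge> 0"
    and csum: "\<forall>l\<in>{1..M-1}. \<forall>p<N (Suc l). (\<Sum>j<k l p. c l p j) = 1"
    and snz: "\<forall>l\<in>{1..M}. s l \<noteq> 0"
  shows "spectrum (msum (N 1) (\<lambda>l. s l \<cdot>\<^sub>m HL N k A a c l) M) =
           {0} \<union> (\<Union>l\<in>{1..M}. spectrum (s l \<cdot>\<^sub>m HL N k A a c l) - {0})"
proof -
  interpret hierarchy M N k c
    using ksum csum by unfold_locales auto
  let ?L = "\<lambda>l. s l \<cdot>\<^sub>m HL N k A a c l"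
  have B: "Bprod N k M \<in> carrier_mat (N 1) 1"
    using Bprod_carrier[of M] Ntop by simp
  have "0 < k M 0" using kpos[rule_format, of M 0] M2 Ntop by simp
  then have "Bprod N k M \<noteq> 0\<^sub>m (N 1) 1"
    using Bprod_neq_0[of M] M2 Ntop by simp
  moreover have "msum (N 1) ?L M * Bprod N k M = 0\<^sub>m (N 1) 1"
    using msum_smult_HL_mult_Bprod Ntop by simp
  ultimately have "0 \<in> spectrum (msum (N 1) ?L M)"
    using eigenvalue_0_if_mult_eq_0[OF msum_carrier[OF smult_HL_carrier] B]
    unfolding spectrum_def by simp
  moreover have "spectrum (msum (N 1) ?L M) - {0} = (\<Union>l\<in>{1..M}. spectrum (?L l)) - {0}"
    using spectrum_msum_minus_0[OF smult_HL_carrier smult_HL_mult_smult_HL] .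
  ultimately show ?thesis by blast
qed

end
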